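(* Let $d\in\mathbb{N}$ and $K=\mathbb{N}_0^d$ or $K=\mathbb{Z}^d$. Let $(\Omega,\mathcal F,P)$ be a probability space and $(\theta_k)_{k\in K}$ a $d$-parameter semigroup (group if $K=\mathbb{Z}^d$) of $P$-preserving transformations. Let $(M,\mathcal B,\mu)$ be a probability space, $\tau$ an ergodic $\mu$-preserving transformation of $M$, $\kappa:M\to K$ measurable, $\kappa_n=\sum_{i=0}^{n-1}\kappa\circ\tau^i$. Assume that for $\mu$-almost all $t\in M$, $(\theta_k)_{k\in K}$ is weakly mixing along $(\kappa_n(t))_{n\in\mathbb{N}}$. Then for every $F\in L^1(M\times\Omega,\mathcal B\otimes\mathcal F,\bar P)$, $\bar P=\mu\otimes P$, $$\frac1n\sum_{i=0}^{n-1}F\big(\tau^i(t),\theta_{\kappa_i(t)}\omega\big)\to\bar E[F]=\int F\,d\bar P\quad(n\to\infty)$$ $\bar P$-almost surely and in $L^1(\bar P)$.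
   Context: A semigroup of measure-preserving transformations: each $\theta_k$ measurable and $P$-preserving, $\theta_0=\mathrm{Id}$, $\theta_k\circ\theta_l=\theta_{k+l}$ (and $\theta_{-k}=\theta_k^{-1}$ in the group case). $(\theta_k)$ is weakly mixing along a $K$-valued sequence $(k_n)$ if $\frac1n\sum_{i=0}^{n-1}|P(A\cap\theta_{k_i}^{-1}B)-P(A)P(B)|\to0$ for all $A,B\in\mathcal F$. *)

theory Defs
  imports "HOL-Probability.Probability"
begin

definition mpt :: "'a measure \<Rightarrow> ('a \<Rightarrow> 'a) \<Rightarrow> bool" where
  "mpt M T \<longleftrightarrow> T \<in> measurable M M \<and> distr M M T = M"

definition ergodic :: "'a measure \<Rightarrow> ('a \<Rightarrow> 'a) \<Rightarrow> bool" where
  "ergodic M T \<longleftrightarrow> mpt M T \<and>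
     (\<forall>A\<in>sets M. T -` A \<inter> space M = A \<longrightarrow> measure M A = 0 \<or> measure M A = 1)"

definition nonneg_lattice :: "(int ^ 'd) set" where
  "nonneg_lattice = {k. \<forall>i. 0 \<le> k $ i}"

text \<open>A semigroup (group, if \<open>K = UNIV\<close>) of \<open>P\<close>-preserving transformations indexed by \<open>K\<close>.\<close>
definition mp_action :: "'a measure \<Rightarrow> (int ^ 'd) set \<Rightarrow> (int ^ 'd \<Rightarrow> 'a \<Rightarrow> 'a) \<Rightarrow> bool" where
  "mp_action P K \<theta> \<longleftrightarrow>
     (\<forall>k\<in>K. mpt P (\<theta> k)) \<and>
     (\<forall>\<omega>\<in>space P. \<theta> 0 \<omega> = \<omega>) \<and>
     (\<forall>k\<in>K. \<forall>l\<in>K. \<forall>\<omega>\<in>space P. \<theta> k (\<theta> l \<omega>) = \<theta> (k + l) \<omega>)"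

definition weakly_mixing_along :: "'a measure \<Rightarrow> ('k \<Rightarrow> 'a \<Rightarrow> 'a) \<Rightarrow> (nat \<Rightarrow> 'k) \<Rightarrow> bool" where
  "weakly_mixing_along P \<theta> ks \<longleftrightarrow>
     (\<forall>A\<in>sets P. \<forall>B\<in>sets P.
        (\<lambda>n. (1 / real n) * (\<Sum>i<n. \<bar>measure P (A \<inter> (\<theta> (ks i) -` B \<inter> space P))
                                         - measure P A * measure P B\<bar>)) \<longlonglongrightarrow> 0)"

end

theory Submission
  imports Defs
begin

text \<open>
  The skew product \<open>S (t, \<omega>) = (\<tau> t, \<theta>\<^bsub>\<kappa> t\<^esub> \<omega>)\<close> preserves \<open>\<mu> \<otimes> P\<close> and satisfies
  \<open>S\<^sup>i (t, \<omega>) = (\<tau>\<^sup>i t, \<theta>\<^bsub>\<kappa>\<^sub>i t\<^esub> \<omega>)\<close>, so the averages in question are Birkhoff averages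
  of \<open>F\<close> along \<open>S\<close>, and the claim is Birkhoff's ergodic theorem (a.e. and in \<open>L\<^sup>1\<close>)
  once \<open>S\<close> is known to be ergodic. Ergodicity follows from mixing on average: for
  rectangles \<open>C \<times> B\<close> and \<open>C' \<times> B'\<close> the \<open>i\<close>-th correlation is
  \<open>\<integral>\<^sub>C 1\<^sub>C\<^sub>'(\<tau>\<^sup>i t) P(B \<inter> \<theta>\<^bsub>\<kappa>\<^sub>i t\<^esub>\<^sup>-\<^sup>1 B') d\<mu>(t)\<close>; weak mixing along \<open>\<kappa>\<^sub>n(t)\<close>
  lets one replace \<open>P(B \<inter> \<theta>\<^sup>-\<^sup>1 B')\<close> by \<open>P(B) P(B')\<close> in Cesaro mean, and the
  \<open>L\<^sup>1\<close> ergodic theorem for \<open>\<tau>\<close> averages the remaining factor to \<open>\<mu>(C) \<mu>(C')\<close>.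
  A Dynkin argument extends mixing on average to all measurable sets, and then an
  invariant set is independent of itself.
\<close>

section \<open>Birkhoff's ergodic theorem\<close>

lemma measurable_funpow: "T \<in> measurable N N \<Longrightarrow> T ^^ n \<in> measurable N N"
  by (induction n) (auto intro: measurable_compose)

lemma mpt_funpow:
  assumes "mpt N T" shows "mpt N (T ^^ n)"
proof (induction n)
  case 0 then show ?case by (simp add: mpt_def distr_id[unfolded id_def])
next
  case (Suc n)
  have T: "T \<in> measurable N N" "distr N N T = N" using assms by (auto simp: mpt_def)
  have Tn: "T ^^ n \<in> measurable N N" "distr N N (T ^^ n) = N" using Suc by (auto simp: mpt_def)
  have "distr N N (T ^^ Suc n) = distr (distr N N T) N (T ^^ n)"
    by (simp add: funpow_Suc_right distr_distr[OF Tn(1) T(1)] del: funpow.simps)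
  also have "\<dots> = N" using T Tn by simp
  finally show ?case using measurable_funpow[OF T(1)] unfolding mpt_def by blast
qed

lemma mpt_emeasure_vimage:
  assumes "mpt N T" "A \<in> sets N"
  shows "emeasure N (T -` A \<inter> space N) = emeasure N A"
  using emeasure_distr[of T N N A] assms by (simp add: mpt_def)

lemma mpt_measure_vimage:
  assumes "mpt N T" "A \<in> sets N"
  shows "measure N (T -` A \<inter> space N) = measure N A"
  using mpt_emeasure_vimage[OF assms] by (simp add: measure_def)

definition birkhoff_sum :: "('a \<Rightarrow> 'a) \<Rightarrow> ('a \<Rightarrow> real) \<Rightarrow> nat \<Rightarrow> 'a \<Rightarrow> real" where
  "birkhoff_sum T g n x = (\<Sum>i<n. g ((T ^^ i) x))"

lemma birkhoff_sum_0 [simp]: "birkhoff_sum T g 0 x = 0"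
  by (simp add: birkhoff_sum_def)

lemma birkhoff_sum_Suc_shift: "birkhoff_sum T g (Suc n) x = g x + birkhoff_sum T g n (T x)"
  unfolding birkhoff_sum_def
  by (simp add: sum.lessThan_Suc_shift funpow_Suc_right del: sum.lessThan_Suc funpow.simps)

lemma birkhoff_sum_diff:
  "birkhoff_sum T (\<lambda>x. f x - g x) n x = birkhoff_sum T f n x - birkhoff_sum T g n x"
  by (simp add: birkhoff_sum_def sum_subtractf)

lemma birkhoff_sum_uminus: "birkhoff_sum T (\<lambda>x. - f x) n x = - birkhoff_sum T f n x"
  by (simp add: birkhoff_sum_def sum_negf)

lemma birkhoff_sum_const: "birkhoff_sum T (\<lambda>x. c) n x = real n * c"
  by (simp add: birkhoff_sum_def)

lemma birkhoff_sum_measurable [measurable]: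
  assumes "T \<in> measurable N N" "g \<in> borel_measurable N"
  shows "birkhoff_sum T g n \<in> borel_measurable N"
  unfolding birkhoff_sum_def using assms measurable_funpow[OF assms(1)]
  by (intro borel_measurable_sum) (auto intro: measurable_comp)

lemma birkhoff_average_indicator_bounds:
  "0 \<le> birkhoff_sum T (indicator C) n x / real n" "birkhoff_sum T (indicator C) n x / real n \<le> 1"
proof -
  have "0 \<le> birkhoff_sum T (indicator C) n x"
    unfolding birkhoff_sum_def by (auto intro!: sum_nonneg)
  moreover have "birkhoff_sum T (indicator C) n x \<le> (\<Sum>i<n. 1)"
    unfolding birkhoff_sum_def by (rule sum_mono) (simp add: indicator_def)
  ultimately show "0 \<le> birkhoff_sum T (indicator C) n x / real n"
    "birkhoff_sum T (indicator C) n x / real n \<le> 1"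
    by (auto simp: divide_le_eq)
qed

lemma unbounded_birkhoff_sum_iff_shift:
  "(\<forall>C. \<exists>n. C < birkhoff_sum T g n x) \<longleftrightarrow> (\<forall>C. \<exists>n. C < birkhoff_sum T g n (T x))"
proof
  assume unbdd: "\<forall>C. \<exists>n. C < birkhoff_sum T g n x"
  show "\<forall>C. \<exists>n. C < birkhoff_sum T g n (T x)"
  proof
    fix C
    obtain n where n: "max C 0 + \<bar>g x\<bar> < birkhoff_sum T g n x" using unbdd by blast
    then obtain j where "n = Suc j" by (cases n) auto
    with n have "C < birkhoff_sum T g j (T x)" by (simp add: birkhoff_sum_Suc_shift)
    then show "\<exists>n. C < birkhoff_sum T g n (T x)" ..
  qed
next
  assume unbdd: "\<forall>C. \<exists>n. C < birkhoff_sum T g n (T x)"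
  show "\<forall>C. \<exists>n. C < birkhoff_sum T g n x"
  proof
    fix C
    obtain n where "C - g x < birkhoff_sum T g n (T x)" using unbdd by blast
    then have "C < birkhoff_sum T g (Suc n) x" by (simp add: birkhoff_sum_Suc_shift)
    then show "\<exists>n. C < birkhoff_sum T g n x" ..
  qed
qed

fun max_birkhoff_sum :: "('a \<Rightarrow> 'a) \<Rightarrow> ('a \<Rightarrow> real) \<Rightarrow> nat \<Rightarrow> 'a \<Rightarrow> real" where
  "max_birkhoff_sum T g 0 x = 0"
| "max_birkhoff_sum T g (Suc n) x = max (max_birkhoff_sum T g n x) (birkhoff_sum T g (Suc n) x)"

lemma max_birkhoff_sum_nonneg: "0 \<le> max_birkhoff_sum T g n x"
  by (induction n) auto

lemma birkhoff_sum_le_max_birkhoff_sum: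
  "k \<le> n \<Longrightarrow> birkhoff_sum T g k x \<le> max_birkhoff_sum T g n x"
proof (induction n)
  case (Suc n) then show ?case by (cases "k = Suc n") (auto simp: le_Suc_eq intro: max.coboundedI1)
qed simp

lemma max_birkhoff_sum_attained:
  "0 < max_birkhoff_sum T g n x \<Longrightarrow>
    \<exists>k. 1 \<le> k \<and> k \<le> n \<and> max_birkhoff_sum T g n x = birkhoff_sum T g k x"
proof (induction n)
  case (Suc n)
  show ?case
  proof (cases "birkhoff_sum T g (Suc n) x \<le> max_birkhoff_sum T g n x")
    case True
    with Suc show ?thesis by (metis le_SucI max_birkhoff_sum.simps(2) max.absorb1)
  qed auto
qed simp

lemma max_birkhoff_sum_le_shift:
  assumes "0 < max_birkhoff_sum T g n x"
  shows "max_birkhoff_sum T g n x \<le> g x + max_birkhoff_sum T g n (T x)"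
proof -
  obtain k where k: "1 \<le> k" "k \<le> n" "max_birkhoff_sum T g n x = birkhoff_sum T g k x"
    using max_birkhoff_sum_attained[OF assms] by blast
  then obtain j where j: "k = Suc j" by (cases k) auto
  have "birkhoff_sum T g j (T x) \<le> max_birkhoff_sum T g n (T x)"
    using k j by (intro birkhoff_sum_le_max_birkhoff_sum) auto
  then show ?thesis using k j by (simp add: birkhoff_sum_Suc_shift)
qed

lemma max_birkhoff_sum_measurable [measurable]:
  assumes "T \<in> measurable N N" "g \<in> borel_measurable N"
  shows "max_birkhoff_sum T g n \<in> borel_measurable N"
  by (induction n) (use assms in auto)

locale mpt_prob_space = prob_space M for M :: "'a measure" +
  fixes T :: "'a \<Rightarrow> 'a"
  assumes mpt: "mpt M T"
begin

lemma measurable_T [measurable]: "T \<in> measurable M M"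
  using mpt by (simp add: mpt_def)

lemma measurable_funpow_T [measurable]: "T ^^ i \<in> measurable M M"
  by (rule measurable_funpow[OF measurable_T])

lemma integrable_comp_funpow_T:
  fixes f :: "'a \<Rightarrow> real"
  assumes "integrable M f"
  shows "integrable M (\<lambda>x. f ((T ^^ i) x))"
  using integrable_distr_eq[of "T ^^ i" M M f] mpt_funpow[OF mpt, of i] assms
  by (simp add: mpt_def)

lemma integral_comp_funpow_T:
  "f \<in> borel_measurable M \<Longrightarrow> (\<integral>x. f ((T ^^ i) x) \<partial>M) = (\<integral>x. f x \<partial>M :: real)"
  using integral_distr[of "T ^^ i" M M f] mpt_funpow[OF mpt, of i] by (simp add: mpt_def)

lemma integrable_birkhoff_sum: "integrable M g \<Longrightarrow> integrable M (birkhoff_sum T g n)"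
  unfolding birkhoff_sum_def by (intro Bochner_Integration.integrable_sum integrable_comp_funpow_T)

lemma integral_birkhoff_sum:
  assumes "integrable M g"
  shows "integral\<^sup>L M (birkhoff_sum T g n) = real n * integral\<^sup>L M g"
proof -
  have "integral\<^sup>L M (birkhoff_sum T g n) = (\<Sum>i<n. \<integral>x. g ((T ^^ i) x) \<partial>M)"
    unfolding birkhoff_sum_def using assms
    by (intro Bochner_Integration.integral_sum integrable_comp_funpow_T)
  also have "\<dots> = (\<Sum>i<n. integral\<^sup>L M g)"
    using assms by (simp add: integral_comp_funpow_T)
  finally show ?thesis by simp
qed

lemma integrable_max_birkhoff_sum: "integrable M g \<Longrightarrow> integrable M (max_birkhoff_sum T g n)"
proof (induction n)
  case 0 then show ?case by simp
next
  case (Suc n) then show ?case by (auto intro: integrable_max integrable_birkhoff_sum)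
qed

lemma maximal_ergodic_lemma:
  assumes g: "integrable M g"
  shows "0 \<le> (\<integral>x. g x * indicator {x\<in>space M. 0 < max_birkhoff_sum T g n x} x \<partial>M)"
proof -
  let ?m = "max_birkhoff_sum T g n" and ?E = "{x\<in>space M. 0 < max_birkhoff_sum T g n x}"
  have [measurable]: "g \<in> borel_measurable M" using g by simp
  have E: "?E \<in> sets M" by measurable
  have im: "integrable M ?m" and imT: "integrable M (\<lambda>x. ?m (T x))"
    using integrable_max_birkhoff_sum[OF g] integrable_comp_funpow_T[of ?m 1] by auto
  have "0 = (\<integral>x. ?m x - ?m (T x) \<partial>M)"
    using im imT integral_comp_funpow_T[of ?m 1] by simp
  also have "\<dots> \<le> (\<integral>x. g x * indicator ?E x \<partial>M)"
  proof (rule integral_mono[OF _ integrable_real_mult_indicator[OF E g]])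
    show "integrable M (\<lambda>x. ?m x - ?m (T x))" using im imT by simp
    fix x assume "x \<in> space M"
    then show "?m x - ?m (T x) \<le> g x * indicator ?E x"
      using max_birkhoff_sum_le_shift[of T g n x] max_birkhoff_sum_nonneg[of T g n x]
        max_birkhoff_sum_nonneg[of T g n "T x"]
      by (cases "0 < ?m x") (auto simp: indicator_def)
  qed
  finally show ?thesis .
qed

lemma integral_nonneg_if_AE_birkhoff_sum_pos:
  assumes g: "integrable M g" and pos: "AE x in M. \<exists>n. 0 < birkhoff_sum T g n x"
  shows "0 \<le> integral\<^sup>L M g"
proof -
  define E where "E n = {x\<in>space M. 0 < max_birkhoff_sum T g n x}" for n
  have [measurable]: "g \<in> borel_measurable M" using g by simp
  have [measurable]: "E n \<in> sets M" for n unfolding E_def by measurable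
  have "(\<lambda>n. \<integral>x. g x * indicator (E n) x \<partial>M) \<longlonglongrightarrow> integral\<^sup>L M g"
  proof (rule integral_dominated_convergence[where w="\<lambda>x. \<bar>g x\<bar>"])
    show "AE x in M. (\<lambda>n. g x * indicator (E n) x) \<longlonglongrightarrow> g x"
      using pos AE_space
    proof eventually_elim
      case (elim x)
      then obtain k where k: "0 < birkhoff_sum T g k x" by blast
      have "g x * indicator (E n) x = g x" if "k \<le> n" for n
        using less_le_trans[OF k birkhoff_sum_le_max_birkhoff_sum[OF that]] elim
        by (simp add: E_def)
      then have "\<forall>\<^sub>F n in sequentially. g x * indicator (E n) x = g x"
        by (rule eventually_sequentiallyI)
      then show ?case by (rule tendsto_eventually)
    qed
  qed (use g in \<open>auto simp: indicator_def\<close>)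
  moreover have "0 \<le> (\<integral>x. g x * indicator (E n) x \<partial>M)" for n
    unfolding E_def by (rule maximal_ergodic_lemma[OF g])
  ultimately show ?thesis by (intro LIMSEQ_le_const) auto
qed

end

lemma tendsto_average_if_linear_bounds:
  fixes s :: "nat \<Rightarrow> real"
  assumes upper: "\<And>m. \<exists>C. \<forall>n. s n \<le> real n * (a + 1 / real (Suc m)) + C"
    and lower: "\<And>m. \<exists>C. \<forall>n. - s n \<le> real n * (- a + 1 / real (Suc m)) + C"
  shows "(\<lambda>n. s n / real n) \<longlonglongrightarrow> a"
proof (rule LIMSEQ_I)
  fix r :: real assume r: "0 < r"
  obtain m :: nat where m: "1 / real (Suc m) < r / 2"
    using reals_Archimedean r by (metis half_gt_zero inverse_eq_divide)
  obtain C1 C2 where C1: "\<forall>n. s n \<le> real n * (a + 1 / real (Suc m)) + C1"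
    and C2: "\<forall>n. - s n \<le> real n * (- a + 1 / real (Suc m)) + C2"
    using upper lower by blast
  define C where "C = \<bar>C1\<bar> + \<bar>C2\<bar>"
  have eps: "real n * (c + 1 / real (Suc m)) = real n * c + real n / real (Suc m)" for n c
    by (simp add: distrib_left)
  have err: "\<bar>s n - real n * a\<bar> \<le> real n / real (Suc m) + C" for n
  proof -
    have "s n - real n * a \<le> real n / real (Suc m) + C"
      using C1[rule_format, of n] eps[of n a] abs_ge_self[of C1] abs_ge_zero[of C2]
      unfolding C_def by linarith
    moreover have "real n * a - s n \<le> real n / real (Suc m) + C"
      using C2[rule_format, of n] eps[of n "- a"] abs_ge_self[of C2] abs_ge_zero[of C1]
      unfolding C_def by simp
    ultimately show ?thesis by (simp add: abs_le_iff)
  qed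
  obtain n0 :: nat where n0: "2 * C / r < real n0" using reals_Archimedean2 by blast
  show "\<exists>no. \<forall>n\<ge>no. norm (s n / real n - a) < r"
  proof (intro exI allI impI)
    fix n assume n: "Suc n0 \<le> n"
    then have npos: "0 < real n" by simp
    have "2 * C < r * real n0" using n0 r by (simp add: field_simps)
    also have "\<dots> \<le> r * real n" using n r by simp
    finally have Cn: "C / real n < r / 2" using npos by (simp add: field_simps)
    have "norm (s n / real n - a) = \<bar>s n - real n * a\<bar> / real n"
      using npos by (simp add: field_simps)
    also have "\<dots> \<le> (real n / real (Suc m) + C) / real n"
      using err[of n] npos by (intro divide_right_mono) auto
    also have "\<dots> = 1 / real (Suc m) + C / real n" using npos by (simp add: field_simps)
    also have "\<dots> < r" using m Cn by linarith
    finally show "norm (s n / real n - a) < r" .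
  qed
qed

lemma unbounded_iff_unbounded_nat:
  fixes s :: "nat \<Rightarrow> real"
  shows "(\<forall>m::nat. \<exists>n. real m < s n) \<longleftrightarrow> (\<forall>C. \<exists>n. C < s n)"
proof
  assume unbdd: "\<forall>m::nat. \<exists>n. real m < s n"
  show "\<forall>C. \<exists>n. C < s n"
  proof
    fix C :: real
    obtain m :: nat where "C < real m" using reals_Archimedean2 by blast
    with unbdd show "\<exists>n. C < s n" by (meson less_trans)
  qed
qed auto

locale ergodic_prob_space = prob_space M for M :: "'a measure" +
  fixes T :: "'a \<Rightarrow> 'a"
  assumes ergodic: "ergodic M T"

sublocale ergodic_prob_space \<subseteq> mpt_prob_space
  using ergodic by unfold_locales (simp add: ergodic_def)

context ergodic_prob_space
begin

lemma AE_birkhoff_sum_bounded_above_if_integral_neg: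
  assumes g: "integrable M g" and neg: "integral\<^sup>L M g < 0"
  shows "AE x in M. \<exists>C. \<forall>n. birkhoff_sum T g n x \<le> C"
proof -
  have [measurable]: "g \<in> borel_measurable M" using g by simp
  define U where "U = {x\<in>space M. \<forall>m::nat. \<exists>n. real m < birkhoff_sum T g n x}"
  have U [measurable]: "U \<in> events" unfolding U_def by measurable
  have U_iff: "x \<in> U \<longleftrightarrow> x \<in> space M \<and> (\<forall>C. \<exists>n. C < birkhoff_sum T g n x)" for x
    unfolding U_def using unbounded_iff_unbounded_nat[of "\<lambda>n. birkhoff_sum T g n x"] by blast
  have "T -` U \<inter> space M = U"
  proof (intro set_eqI)
    fix x
    show "x \<in> T -` U \<inter> space M \<longleftrightarrow> x \<in> U"
      using U_iff[of x] U_iff[of "T x"] unbounded_birkhoff_sum_iff_shift[of T g x]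
        measurable_space[OF measurable_T, of x] by blast
  qed
  then have "prob U = 0 \<or> prob U = 1" using ergodic U by (simp add: ergodic_def)
  moreover have "prob U \<noteq> 1"
  proof
    assume "prob U = 1"
    then have "AE x in M. x \<in> U" using U by (simp add: AE_prob_1)
    then have "AE x in M. \<exists>n. 0 < birkhoff_sum T g n x" by eventually_elim (use U_iff in blast)
    then show False using integral_nonneg_if_AE_birkhoff_sum_pos[OF g] neg by simp
  qed
  ultimately have "U \<in> null_sets M" using U by (simp add: null_sets_def emeasure_eq_measure)
  moreover have "{x\<in>space M. \<not> (\<exists>C. \<forall>n. birkhoff_sum T g n x \<le> C)} \<subseteq> U"
    by (auto simp: U_iff not_le)
  ultimately show ?thesis by (rule AE_I')
qed

lemma AE_birkhoff_sum_le_linear: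
  assumes f: "integrable M f" and "0 < \<epsilon>"
  shows "AE x in M. \<exists>C. \<forall>n. birkhoff_sum T f n x \<le> real n * (integral\<^sup>L M f + \<epsilon>) + C"
proof -
  let ?c = "integral\<^sup>L M f + \<epsilon>"
  have "AE x in M. \<exists>C. \<forall>n. birkhoff_sum T (\<lambda>x. f x - ?c) n x \<le> C"
    using f \<open>0 < \<epsilon>\<close> by (intro AE_birkhoff_sum_bounded_above_if_integral_neg) (auto simp: prob_space)
  then show ?thesis
    by eventually_elim (auto simp: birkhoff_sum_diff birkhoff_sum_const prob_space algebra_simps)
qed

theorem birkhoff_ergodic_AE:
  assumes f: "integrable M f"
  shows "AE x in M. (\<lambda>n. birkhoff_sum T f n x / real n) \<longlonglongrightarrow> integral\<^sup>L M f"
proof -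
  let ?I = "integral\<^sup>L M f" and ?\<epsilon> = "\<lambda>m. 1 / real (Suc m)"
  have "AE x in M. \<forall>m.
      (\<exists>C. \<forall>n. birkhoff_sum T f n x \<le> real n * (?I + ?\<epsilon> m) + C) \<and>
      (\<exists>C. \<forall>n. birkhoff_sum T (\<lambda>x. - f x) n x \<le> real n * (- ?I + ?\<epsilon> m) + C)"
    unfolding AE_all_countable
    using f AE_birkhoff_sum_le_linear[of f] AE_birkhoff_sum_le_linear[of "\<lambda>x. - f x"]
    by (auto intro!: AE_conjI)
  then show ?thesis
  proof eventually_elim
    case (elim x)
    show ?case
    proof (rule tendsto_average_if_linear_bounds)
      show "\<exists>C. \<forall>n. birkhoff_sum T f n x \<le> real n * (?I + ?\<epsilon> m) + C" for m
        using elim by blast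
      show "\<exists>C. \<forall>n. - birkhoff_sum T f n x \<le> real n * (- ?I + ?\<epsilon> m) + C" for m
        using elim by (simp add: birkhoff_sum_uminus)
    qed
  qed
qed

lemma birkhoff_ergodic_L1_nonneg:
  assumes h: "integrable M h" and nonneg: "\<And>x. x \<in> space M \<Longrightarrow> 0 \<le> h x"
  shows "(\<lambda>n. \<integral>\<^sup>+x. norm (birkhoff_sum T h n x / real n - integral\<^sup>L M h) \<partial>M) \<longlonglongrightarrow> 0"
proof (rule Scheffe_lemma2)
  have [measurable]: "h \<in> borel_measurable M" using h by simp
  show "(\<lambda>x. birkhoff_sum T h n x / real n) \<in> borel_measurable M" for n by measurable
  show "AE x in M. (\<lambda>n. birkhoff_sum T h n x / real n) \<longlonglongrightarrow> integral\<^sup>L M h"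
    using h by (rule birkhoff_ergodic_AE)
  fix n
  have sum_nonneg: "0 \<le> birkhoff_sum T h n x" if "x \<in> space M" for x
    using that nonneg measurable_space[OF measurable_funpow_T]
    unfolding birkhoff_sum_def by (auto intro!: sum_nonneg)
  have "(\<integral>\<^sup>+x. norm (birkhoff_sum T h n x / real n) \<partial>M)
      = ennreal (\<integral>x. birkhoff_sum T h n x / real n \<partial>M)"
    using sum_nonneg integrable_birkhoff_sum[OF h]
    by (subst nn_integral_eq_integral[symmetric]) (auto intro!: nn_integral_cong)
  also have "\<dots> = ennreal (real n * integral\<^sup>L M h / real n)"
    using integral_birkhoff_sum[OF h] by simp
  also have "\<dots> \<le> ennreal (integral\<^sup>L M h)"
    using Bochner_Integration.integral_nonneg[of M h, OF nonneg] by (cases "n = 0") auto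
  also have "\<dots> = (\<integral>\<^sup>+x. norm (integral\<^sup>L M h) \<partial>M)"
    using Bochner_Integration.integral_nonneg[of M h, OF nonneg] by (simp add: emeasure_space_1)
  finally show "(\<integral>\<^sup>+x. norm (birkhoff_sum T h n x / real n) \<partial>M) \<le> (\<integral>\<^sup>+x. norm (integral\<^sup>L M h) \<partial>M)" .
qed simp

theorem birkhoff_ergodic_L1:
  assumes f: "integrable M f"
  shows "(\<lambda>n. \<integral>\<^sup>+x. ennreal \<bar>birkhoff_sum T f n x / real n - integral\<^sup>L M f\<bar> \<partial>M) \<longlonglongrightarrow> 0"
proof -
  define p where "p x = max (f x) 0" for x
  define q where "q x = max (- f x) 0" for x
  have ip: "integrable M p" and iq: "integrable M q" unfolding p_def q_def using f by auto
  have f_eq: "f = (\<lambda>x. p x - q x)" unfolding p_def q_def by auto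
  let ?err = "\<lambda>g n x. norm (birkhoff_sum T g n x / real n - integral\<^sup>L M g)"
  have err_le: "\<bar>birkhoff_sum T f n x / real n - integral\<^sup>L M f\<bar> \<le> ?err p n x + ?err q n x" for n x
  proof -
    have "birkhoff_sum T f n x / real n - integral\<^sup>L M f
        = (birkhoff_sum T p n x / real n - integral\<^sup>L M p) - (birkhoff_sum T q n x / real n - integral\<^sup>L M q)"
      using ip iq by (subst (1 2) f_eq) (simp add: birkhoff_sum_diff diff_divide_distrib)
    then show ?thesis by (simp add: abs_triangle_ineq4)
  qed
  have "(\<integral>\<^sup>+x. ennreal \<bar>birkhoff_sum T f n x / real n - integral\<^sup>L M f\<bar> \<partial>M)
      \<le> (\<integral>\<^sup>+x. ?err p n x \<partial>M) + (\<integral>\<^sup>+x. ?err q n x \<partial>M)" (is "?L n \<le> ?R n") for n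
  proof -
    have "(\<integral>\<^sup>+x. ennreal \<bar>birkhoff_sum T f n x / real n - integral\<^sup>L M f\<bar> \<partial>M)
        \<le> (\<integral>\<^sup>+x. ennreal (?err p n x) + ennreal (?err q n x) \<partial>M)"
      using err_le by (intro nn_integral_mono) (simp add: ennreal_plus[symmetric] del: ennreal_plus)
    also have "\<dots> = (\<integral>\<^sup>+x. ?err p n x \<partial>M) + (\<integral>\<^sup>+x. ?err q n x \<partial>M)"
      using ip iq by (intro nn_integral_add) auto
    finally show ?thesis .
  qed
  moreover have "?R \<longlonglongrightarrow> 0 + 0"
    by (intro tendsto_add birkhoff_ergodic_L1_nonneg ip iq) (auto simp: p_def q_def)
  ultimately show ?thesis
    by (intro tendsto_sandwich[where f="\<lambda>n. 0" and g="?L" and h="?R"] always_eventually allI) auto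
qed

corollary birkhoff_ergodic_L1_integral:
  assumes f: "integrable M f"
  shows "(\<lambda>n. \<integral>x. \<bar>birkhoff_sum T f n x / real n - integral\<^sup>L M f\<bar> \<partial>M) \<longlonglongrightarrow> 0"
proof -
  have "(\<integral>\<^sup>+x. ennreal \<bar>birkhoff_sum T f n x / real n - integral\<^sup>L M f\<bar> \<partial>M)
      = ennreal (\<integral>x. \<bar>birkhoff_sum T f n x / real n - integral\<^sup>L M f\<bar> \<partial>M)" for n
    using integrable_birkhoff_sum[OF f] by (intro nn_integral_eq_integral) auto
  then have "(\<lambda>n. ennreal (\<integral>x. \<bar>birkhoff_sum T f n x / real n - integral\<^sup>L M f\<bar> \<partial>M)) \<longlonglongrightarrow> ennreal 0"
    using birkhoff_ergodic_L1[OF f] by simp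
  then show ?thesis by (subst (asm) tendsto_ennreal_iff) auto
qed

end

section \<open>Mixing on average and ergodicity\<close>

lemma tendsto_if_uniform_approximation:
  fixes a :: "nat \<Rightarrow> real"
  assumes approx_lim: "\<And>N. b N \<longlonglongrightarrow> L' N"
    and approx: "\<And>N n. \<bar>a n - b N n\<bar> \<le> d N"
    and lim_approx: "\<And>N. \<bar>L - L' N\<bar> \<le> d N"
    and "d \<longlonglongrightarrow> 0"
  shows "a \<longlonglongrightarrow> L"
proof (rule LIMSEQ_I)
  fix r :: real assume r: "0 < r"
  obtain N where dN: "\<bar>d N\<bar> < r / 3"
    using LIMSEQ_D[OF \<open>d \<longlonglongrightarrow> 0\<close>, of "r / 3"] r by auto
  obtain n0 where n0: "\<forall>n\<ge>n0. \<bar>b N n - L' N\<bar> < r / 3"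
    using LIMSEQ_D[OF approx_lim, of "r / 3"] r by auto
  show "\<exists>no. \<forall>n\<ge>no. norm (a n - L) < r"
  proof (intro exI allI impI)
    fix n assume "n0 \<le> n"
    then show "norm (a n - L) < r" using n0 approx[of n N] lim_approx[of N] dN
      unfolding real_norm_def abs_le_iff abs_less_iff by force
  qed
qed

lemma abs_average_diff_le:
  fixes a b :: "nat \<Rightarrow> real"
  assumes "\<And>i. \<bar>a i - b i\<bar> \<le> d"
  shows "\<bar>(\<Sum>i<n. a i) / real n - (\<Sum>i<n. b i) / real n\<bar> \<le> d"
proof (cases "n = 0")
  case True
  then show ?thesis using assms[of 0] by simp
next
  case False
  have "\<bar>\<Sum>i<n. a i - b i\<bar> \<le> (\<Sum>i<n. d)"
    by (rule order_trans[OF sum_abs sum_mono]) (rule assms)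
  then show ?thesis
    using False by (simp add: sum_subtractf diff_divide_distrib[symmetric] divide_le_eq mult.commute)
qed

lemma vimage_funpow_invariant:
  assumes inv: "T -` A \<inter> S = A" and into: "\<And>x. x \<in> S \<Longrightarrow> T x \<in> S"
  shows "(T ^^ i) -` A \<inter> S = A"
proof (induction i)
  case 0 then show ?case using inv by auto
next
  case (Suc i)
  have "(T ^^ Suc i) x \<in> A \<longleftrightarrow> T x \<in> A" if "x \<in> S" for x
    using Suc into[OF that] by (auto simp: funpow_Suc_right simp del: funpow.simps)
  then show ?case using inv by blast
qed

definition correlation_average :: "'a measure \<Rightarrow> ('a \<Rightarrow> 'a) \<Rightarrow> 'a set \<Rightarrow> 'a set \<Rightarrow> nat \<Rightarrow> real" where
  "correlation_average N T E A n = (\<Sum>i<n. measure N (E \<inter> ((T ^^ i) -` A \<inter> space N))) / real n"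

definition mixing_on_average :: "'a measure \<Rightarrow> ('a \<Rightarrow> 'a) \<Rightarrow> 'a set \<Rightarrow> 'a set \<Rightarrow> bool" where
  "mixing_on_average N T E A \<longleftrightarrow> correlation_average N T E A \<longlonglongrightarrow> measure N E * measure N A"

context mpt_prob_space
begin

lemma correlation_average_Un:
  assumes [measurable]: "E \<in> events" "X \<in> events" "Y \<in> events" and "X \<inter> Y = {}"
  shows "correlation_average M T E (X \<union> Y) n = correlation_average M T E X n + correlation_average M T E Y n"
proof -
  have "prob (E \<inter> ((T ^^ i) -` (X \<union> Y) \<inter> space M))
      = prob (E \<inter> ((T ^^ i) -` X \<inter> space M)) + prob (E \<inter> ((T ^^ i) -` Y \<inter> space M))" for i
    using \<open>X \<inter> Y = {}\<close>
    by (subst finite_measure_Union[symmetric]) (auto intro!: arg_cong[where f=prob])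
  then show ?thesis
    unfolding correlation_average_def by (simp add: sum.distrib add_divide_distrib)
qed

lemma correlation_average_compl:
  assumes [measurable]: "E \<in> events" "A \<in> events" and "n \<noteq> 0"
  shows "correlation_average M T E (space M - A) n = prob E - correlation_average M T E A n"
proof -
  have "E \<inter> ((T ^^ i) -` (space M - A) \<inter> space M) = E - (E \<inter> ((T ^^ i) -` A \<inter> space M))" for i
    using sets.sets_into_space[OF assms(1)] measurable_space[OF measurable_funpow_T] by auto
  then have "prob (E \<inter> ((T ^^ i) -` (space M - A) \<inter> space M))
      = prob E - prob (E \<inter> ((T ^^ i) -` A \<inter> space M))" for i
    by (simp add: finite_measure_Diff)
  then show ?thesis
    using \<open>n \<noteq> 0\<close> unfolding correlation_average_def by (simp add: sum_subtractf diff_divide_distrib)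
qed

lemma correlation_average_diff_le:
  assumes [measurable]: "E \<in> events" "A \<in> events" "B \<in> events" and "A \<subseteq> B"
  shows "\<bar>correlation_average M T E B n - correlation_average M T E A n\<bar> \<le> prob (B - A)"
  unfolding correlation_average_def
proof (rule abs_average_diff_le)
  fix i
  have "E \<inter> ((T ^^ i) -` B \<inter> space M)
      = (E \<inter> ((T ^^ i) -` A \<inter> space M)) \<union> (E \<inter> ((T ^^ i) -` (B - A) \<inter> space M))"
    using \<open>A \<subseteq> B\<close> by blast
  then have "prob (E \<inter> ((T ^^ i) -` B \<inter> space M))
      = prob (E \<inter> ((T ^^ i) -` A \<inter> space M)) + prob (E \<inter> ((T ^^ i) -` (B - A) \<inter> space M))"
    by (auto intro: finite_measure_Union)
  moreover have "prob (E \<inter> ((T ^^ i) -` (B - A) \<inter> space M)) \<le> prob ((T ^^ i) -` (B - A) \<inter> space M)"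
    by (intro finite_measure_mono) auto
  moreover have "prob ((T ^^ i) -` (B - A) \<inter> space M) = prob (B - A)"
    by (intro mpt_measure_vimage mpt_funpow mpt) measurable
  ultimately show "\<bar>prob (E \<inter> ((T ^^ i) -` B \<inter> space M)) - prob (E \<inter> ((T ^^ i) -` A \<inter> space M))\<bar>
      \<le> prob (B - A)"
    by simp
qed

lemma mixing_on_average_empty: "mixing_on_average M T E {}"
proof -
  have "correlation_average M T E {} = (\<lambda>n. 0)" by (simp add: fun_eq_iff correlation_average_def)
  then show ?thesis by (simp add: mixing_on_average_def)
qed

lemma mixing_on_average_Un:
  assumes "E \<in> events" "X \<in> events" "Y \<in> events" "X \<inter> Y = {}"
    and "mixing_on_average M T E X" "mixing_on_average M T E Y"
  shows "mixing_on_average M T E (X \<union> Y)"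
proof -
  have "(\<lambda>n. correlation_average M T E X n + correlation_average M T E Y n)
      \<longlonglongrightarrow> prob E * prob X + prob E * prob Y"
    using assms by (intro tendsto_add) (simp_all add: mixing_on_average_def)
  moreover have "correlation_average M T E (X \<union> Y)
      = (\<lambda>n. correlation_average M T E X n + correlation_average M T E Y n)"
    using assms by (simp add: fun_eq_iff correlation_average_Un)
  ultimately show ?thesis
    using assms by (simp add: mixing_on_average_def finite_measure_Union distrib_left)
qed

lemma mixing_on_average_compl:
  assumes "E \<in> events" "A \<in> events" "mixing_on_average M T E A"
  shows "mixing_on_average M T E (space M - A)"
proof -
  have "(\<lambda>n. prob E - correlation_average M T E A n) \<longlonglongrightarrow> prob E - prob E * prob A"
    using assms by (intro tendsto_intros) (simp add: mixing_on_average_def)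
  moreover have "\<forall>\<^sub>F n in sequentially.
      prob E - correlation_average M T E A n = correlation_average M T E (space M - A) n"
    using assms by (intro eventually_sequentiallyI[of 1]) (simp add: correlation_average_compl)
  ultimately show ?thesis
    using assms by (simp add: mixing_on_average_def prob_compl right_diff_distrib tendsto_cong)
qed

lemma mixing_on_average_UN:
  fixes A :: "nat \<Rightarrow> 'a set"
  assumes A: "range A \<subseteq> events" "disjoint_family A" and E: "E \<in> events"
    and mix: "\<And>j. mixing_on_average M T E (A j)"
  shows "mixing_on_average M T E (\<Union>j. A j)"
proof -
  define U where "U N = (\<Union>j<N. A j)" for N
  have U_events [measurable]: "U N \<in> events" for N unfolding U_def using A by auto
  have UN_A [measurable]: "(\<Union>j. A j) \<in> events" using A by auto
  have U_subset: "U N \<subseteq> (\<Union>j. A j)" for N by (auto simp: U_def)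
  have mix_U: "mixing_on_average M T E (U N)" for N
  proof (induction N)
    case 0 then show ?case by (simp add: U_def mixing_on_average_empty)
  next
    case (Suc N)
    have "A j \<inter> A N = {}" if "j < N" for j
      using A(2) that unfolding disjoint_family_on_def by auto
    then have "U N \<inter> A N = {}" unfolding U_def by auto
    then show ?case
      using mixing_on_average_Un[OF E _ _ _ Suc mix[of N]] A
      by (simp add: U_def lessThan_Suc Un_commute)
  qed
  define d where "d N = prob ((\<Union>j. A j) - U N)" for N
  have d_eq: "d N = prob (\<Union>j. A j) - prob (U N)" for N
    unfolding d_def using U_subset by (simp add: finite_measure_Diff)
  show ?thesis
    unfolding mixing_on_average_def
  proof (rule tendsto_if_uniform_approximation)
    show "correlation_average M T E (U N) \<longlonglongrightarrow> prob E * prob (U N)" for N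
      using mix_U by (simp add: mixing_on_average_def)
    show "\<bar>correlation_average M T E (\<Union>j. A j) n - correlation_average M T E (U N) n\<bar> \<le> d N" for N n
      unfolding d_def using U_subset E by (intro correlation_average_diff_le) auto
    show "\<bar>prob E * prob (\<Union>j. A j) - prob E * prob (U N)\<bar> \<le> d N" for N
    proof -
      have "0 \<le> d N" by (simp add: d_def)
      then show ?thesis
        by (simp add: d_eq[symmetric] right_diff_distrib[symmetric] abs_mult mult_left_le_one_le)
    qed
    have "incseq U" unfolding incseq_def U_def by (intro allI impI UN_mono) auto
    then have "(\<lambda>N. prob (U N)) \<longlonglongrightarrow> prob (\<Union>N. U N)"
      using U_events by (intro finite_Lim_measure_incseq) auto
    moreover have "(\<Union>N. U N) = (\<Union>j. A j)" by (auto simp: U_def)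
    ultimately have "(\<lambda>N. prob (\<Union>j. A j) - prob (U N)) \<longlonglongrightarrow> prob (\<Union>j. A j) - prob (\<Union>j. A j)"
      by (intro tendsto_diff tendsto_const) simp
    then show "d \<longlonglongrightarrow> 0" by (simp add: d_eq[abs_def])
  qed
qed

lemma mixing_on_average_sigma_sets:
  assumes gen: "sets M = sigma_sets (space M) G" "Int_stable G" "G \<subseteq> Pow (space M)"
    and E: "E \<in> events" and mix: "\<And>A. A \<in> G \<Longrightarrow> mixing_on_average M T E A"
    and A: "A \<in> events"
  shows "mixing_on_average M T E A"
proof -
  from A gen(1) have "A \<in> sigma_sets (space M) G" by simp
  from gen(2,3) this show ?thesis
  proof (induction rule: sigma_sets_induct_disjoint)
    case (basic A) then show ?case by (rule mix)
  next
    case empty then show ?case by (rule mixing_on_average_empty)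
  next
    case (compl A) then show ?case using E gen(1) by (intro mixing_on_average_compl) auto
  next
    case (union A) then show ?case using E gen(1) by (intro mixing_on_average_UN) auto
  qed
qed

theorem ergodic_if_mixing_on_average:
  assumes gen: "sets M = sigma_sets (space M) G" "Int_stable G" "G \<subseteq> Pow (space M)"
    and mix: "\<And>E A. E \<in> G \<Longrightarrow> A \<in> G \<Longrightarrow> mixing_on_average M T E A"
  shows "ergodic M T"
  unfolding ergodic_def
proof (intro conjI mpt ballI impI)
  fix A assume A: "A \<in> events" and inv: "T -` A \<inter> space M = A"
  have G_events: "G \<subseteq> events" using gen(1) by auto
  have "prob (E \<inter> A) = prob E * prob A" if E: "E \<in> G" for E
  proof -
    have "correlation_average M T E A \<longlonglongrightarrow> prob E * prob A"
      using mixing_on_average_sigma_sets[OF gen _ mix[OF E] A] E G_events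
      by (auto simp: mixing_on_average_def)
    moreover have "correlation_average M T E A n = prob (E \<inter> A)" if "n \<noteq> 0" for n
      using that measurable_space[OF measurable_T]
      by (simp add: correlation_average_def vimage_funpow_invariant[OF inv] Int_assoc)
    then have "\<forall>\<^sub>F n in sequentially. correlation_average M T E A n = prob (E \<inter> A)"
      by (intro eventually_sequentiallyI[of 1]) auto
    then have "correlation_average M T E A \<longlonglongrightarrow> prob (E \<inter> A)" by (rule tendsto_eventually)
    ultimately show ?thesis by (rule LIMSEQ_unique[symmetric])
  qed
  then have "indep_set G {A}" using G_events A by (simp add: indep_sets2_eq Int_commute)
  then have "indep_set (sigma_sets (space M) G) (sigma_sets (space M) {A})"
    using gen(2) by (intro indep_set_sigma_sets) (auto simp: Int_stable_def)
  moreover have "A \<in> sigma_sets (space M) G" "A \<in> sigma_sets (space M) {A}"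
    using A gen(1) by auto
  ultimately have "prob (A \<inter> A) = prob A * prob A" unfolding indep_sets2_eq by blast
  then have "prob A * (1 - prob A) = 0" by (simp add: algebra_simps)
  then show "prob A = 0 \<or> prob A = 1" by simp
qed

lemma measure_Int_vimage_funpow_eq_integral:
  assumes [measurable]: "C \<in> events" "C' \<in> events"
  shows "prob (C \<inter> ((T ^^ i) -` C' \<inter> space M)) = (\<integral>t. indicator C t * indicator C' ((T ^^ i) t) \<partial>M)"
proof -
  have "prob (C \<inter> ((T ^^ i) -` C' \<inter> space M)) = (\<integral>t. indicator (C \<inter> ((T ^^ i) -` C' \<inter> space M)) t \<partial>M)"
    by (simp add: Int_assoc)
  also have "\<dots> = (\<integral>t. indicator C t * indicator C' ((T ^^ i) t) \<partial>M)"
    by (intro Bochner_Integration.integral_cong) (auto simp: indicator_def)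
  finally show ?thesis .
qed

lemma correlation_average_eq_integral:
  assumes [measurable]: "C \<in> events" "C' \<in> events"
  shows "correlation_average M T C C' n
    = (\<integral>t. indicator C t * (birkhoff_sum T (indicator C') n t / real n) \<partial>M)"
proof -
  have "integrable M (\<lambda>t. indicator C t * indicator C' ((T ^^ i) t) :: real)" for i
    by (intro integrable_const_bound[where B=1]) (auto simp: indicator_def)
  moreover have "indicator C t * (birkhoff_sum T (indicator C') n t / real n)
      = (\<Sum>i<n. indicator C t * indicator C' ((T ^^ i) t)) / real n" for t
    by (simp only: birkhoff_sum_def sum_distrib_left times_divide_eq_right)
  ultimately show ?thesis
    unfolding correlation_average_def measure_Int_vimage_funpow_eq_integral[OF assms]
    by (simp only: Bochner_Integration.integral_sum integral_divide_zero)
qed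

lemma abs_correlation_average_minus_prod_le:
  assumes [measurable]: "C \<in> events" "C' \<in> events"
  shows "\<bar>correlation_average M T C C' n - prob C * prob C'\<bar>
    \<le> (\<integral>t. \<bar>birkhoff_sum T (indicator C') n t / real n - prob C'\<bar> \<partial>M)"
proof -
  let ?A = "\<lambda>t. birkhoff_sum T (indicator C') n t / real n"
  have ind: "integrable M (indicator C' :: 'a \<Rightarrow> real)"
    by (intro integrable_const_bound[where B=1]) (auto simp: indicator_def)
  have CA_bound: "norm (indicator C t * ?A t) \<le> 1" for t
    using birkhoff_average_indicator_bounds[of T C' n t] by (cases "t \<in> C") simp_all
  have "(\<integral>t. indicator C t * prob C' \<partial>M) = prob C * prob C'"
    by (simp add: Int_absorb2 sets.sets_into_space)
  then have "correlation_average M T C C' n - prob C * prob C'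
      = (\<integral>t. indicator C t * ?A t \<partial>M) - (\<integral>t. indicator C t * prob C' \<partial>M)"
    by (simp only: correlation_average_eq_integral[OF assms])
  also have "\<dots> = (\<integral>t. indicator C t * ?A t - indicator C t * prob C' \<partial>M)"
    by (intro Bochner_Integration.integral_diff[symmetric] integrable_const_bound[where B=1] AE_I2 CA_bound)
      (auto simp: indicator_def)
  also have "\<dots> = (\<integral>t. indicator C t * (?A t - prob C') \<partial>M)"
    by (simp only: right_diff_distrib)
  also have "\<bar>\<dots>\<bar> \<le> (\<integral>t. \<bar>indicator C t * (?A t - prob C')\<bar> \<partial>M)"
    by (rule integral_abs_bound)
  also have "\<dots> \<le> (\<integral>t. \<bar>?A t - prob C'\<bar> \<partial>M)"
  proof (rule integral_mono)
    have int: "integrable M (\<lambda>t. ?A t - prob C')" using integrable_birkhoff_sum[OF ind] by simp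
    then show "integrable M (\<lambda>t. \<bar>?A t - prob C'\<bar>)" by (rule integrable_abs)
    show "integrable M (\<lambda>t. \<bar>indicator C t * (?A t - prob C')\<bar>)"
      using integrable_abs[OF integrable_real_mult_indicator[OF assms(1) int]] by (simp only: mult.commute)
    show "\<bar>indicator C t * (?A t - prob C')\<bar> \<le> \<bar>?A t - prob C'\<bar>" for t
      by (simp add: abs_mult indicator_def)
  qed
  finally show ?thesis .
qed

end

context ergodic_prob_space
begin

lemma mixing_on_average_if_ergodic:
  assumes "C \<in> events" "C' \<in> events"
  shows "mixing_on_average M T C C'"
proof -
  have "integrable M (indicator C' :: 'a \<Rightarrow> real)"
    using assms(2) by (intro integrable_const_bound[where B=1]) (auto simp: indicator_def)
  from birkhoff_ergodic_L1_integral[OF this]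
  have lim: "(\<lambda>n. \<integral>t. \<bar>birkhoff_sum T (indicator C') n t / real n - prob C'\<bar> \<partial>M) \<longlonglongrightarrow> 0"
    using assms(2) by simp
  have "\<forall>n. norm (correlation_average M T C C' n - prob C * prob C')
      \<le> (\<integral>t. \<bar>birkhoff_sum T (indicator C') n t / real n - prob C'\<bar> \<partial>M)"
    using abs_correlation_average_minus_prod_le[OF assms] by simp
  from Lim_null_comparison[OF always_eventually[OF this] lim]
  have "(\<lambda>n. correlation_average M T C C' n - prob C * prob C') \<longlonglongrightarrow> 0" .
  then show ?thesis by (simp add: mixing_on_average_def LIM_zero_iff)
qed

end

section \<open>The skew product\<close>

lemma countable_int_vec_set: "countable (K :: (int ^ 'd) set)"
proof -
  have "countable {v :: int ^ 'd. \<forall>i. v $ i \<in> UNIV}"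
    by (rule countable_vector) simp
  then show ?thesis by (rule countable_subset[rotated]) simp
qed

locale skew_product = M: prob_space M + P: prob_space P
  for M :: "'m measure" and P :: "'a measure" +
  fixes K :: "(int ^ 'd) set" and \<theta> :: "int ^ 'd \<Rightarrow> 'a \<Rightarrow> 'a"
    and \<tau> :: "'m \<Rightarrow> 'm" and \<kappa> :: "'m \<Rightarrow> int ^ 'd"
  assumes zero_in_K: "0 \<in> K" and add_in_K: "\<And>k l. k \<in> K \<Longrightarrow> l \<in> K \<Longrightarrow> k + l \<in> K"
    and action: "mp_action P K \<theta>"
    and ergodic_base: "ergodic M \<tau>"
    and measurable_\<kappa>: "\<kappa> \<in> measurable M (count_space K)"
    and weakly_mixing: "AE t in M. weakly_mixing_along P \<theta> (\<lambda>n. \<Sum>i<n. \<kappa> ((\<tau> ^^ i) t))"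
begin

sublocale MP: pair_prob_space M P ..

sublocale base: ergodic_prob_space M \<tau>
  by unfold_locales (rule ergodic_base)

definition cocycle :: "nat \<Rightarrow> 'm \<Rightarrow> int ^ 'd" where
  "cocycle n t = (\<Sum>i<n. \<kappa> ((\<tau> ^^ i) t))"

definition skew :: "'m \<times> 'a \<Rightarrow> 'm \<times> 'a" where
  "skew x = (\<tau> (fst x), \<theta> (\<kappa> (fst x)) (snd x))"

lemma mpt_\<theta>: "k \<in> K \<Longrightarrow> mpt P (\<theta> k)"
  using action by (simp add: mp_action_def)

lemma measurable_\<theta>: "k \<in> K \<Longrightarrow> \<theta> k \<in> measurable P P"
  using mpt_\<theta> by (simp add: mpt_def)

lemma \<kappa>_in_K: "t \<in> space M \<Longrightarrow> \<kappa> t \<in> K"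
  using measurable_space[OF measurable_\<kappa>] by simp

lemma cocycle_Suc: "cocycle (Suc i) t = cocycle i t + \<kappa> ((\<tau> ^^ i) t)"
  by (simp add: cocycle_def)

lemma cocycle_in_K: "t \<in> space M \<Longrightarrow> cocycle i t \<in> K"
  by (induction i)
    (auto simp: cocycle_def zero_in_K intro!: add_in_K \<kappa>_in_K measurable_space[OF base.measurable_funpow_T])

lemma measurable_cocycle: "cocycle i \<in> measurable M (count_space K)"
proof (induction i)
  case 0
  then show ?case using zero_in_K by (simp add: cocycle_def[abs_def])
next
  case (Suc i)
  have "(\<lambda>t. (\<lambda>k t. k + \<kappa> ((\<tau> ^^ i) t)) (cocycle i t) t) \<in> measurable M (count_space K)"
  proof (rule measurable_compose_countable'[OF _ Suc countable_int_vec_set])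
    fix k assume "k \<in> K"
    then have "(\<lambda>l. k + l) \<in> measurable (count_space K) (count_space K)"
      using add_in_K by auto
    then show "(\<lambda>t. k + \<kappa> ((\<tau> ^^ i) t)) \<in> measurable M (count_space K)"
      by (rule measurable_compose[OF measurable_compose[OF base.measurable_funpow_T measurable_\<kappa>]])
  qed
  then show ?case by (simp add: cocycle_Suc[abs_def])
qed

lemma measurable_comp_cocycle: "(\<lambda>t. g (cocycle i t)) \<in> borel_measurable M"
  using measurable_compose_countable'[OF _ measurable_cocycle countable_int_vec_set, of "\<lambda>k t. g k"]
  by simp

lemma measurable_skew [measurable]: "skew \<in> measurable (M \<Otimes>\<^sub>M P) (M \<Otimes>\<^sub>M P)"
  unfolding skew_def
proof (rule measurable_Pair)
  show "(\<lambda>x. \<tau> (fst x)) \<in> measurable (M \<Otimes>\<^sub>M P) M"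
    by (rule measurable_compose[OF measurable_fst base.measurable_T])
  have "(\<lambda>x. (\<lambda>k x. \<theta> k (snd x)) (\<kappa> (fst x)) x) \<in> measurable (M \<Otimes>\<^sub>M P) P"
  proof (rule measurable_compose_countable'[OF _ _ countable_int_vec_set])
    show "(\<lambda>x. \<theta> k (snd x)) \<in> measurable (M \<Otimes>\<^sub>M P) P" if "k \<in> K" for k
      by (rule measurable_compose[OF measurable_snd measurable_\<theta>[OF that]])
    show "(\<lambda>x. \<kappa> (fst x)) \<in> measurable (M \<Otimes>\<^sub>M P) (count_space K)"
      by (rule measurable_compose[OF measurable_fst measurable_\<kappa>])
  qed
  then show "(\<lambda>x. \<theta> (\<kappa> (fst x)) (snd x)) \<in> measurable (M \<Otimes>\<^sub>M P) P" by simp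
qed

lemma funpow_skew:
  assumes "t \<in> space M" "\<omega> \<in> space P"
  shows "(skew ^^ i) (t, \<omega>) = ((\<tau> ^^ i) t, \<theta> (cocycle i t) \<omega>)"
proof (induction i)
  case 0
  then show ?case using action assms by (simp add: cocycle_def mp_action_def)
next
  case (Suc i)
  have "\<theta> (\<kappa> ((\<tau> ^^ i) t)) (\<theta> (cocycle i t) \<omega>) = \<theta> (cocycle (Suc i) t) \<omega>"
    using action assms \<kappa>_in_K cocycle_in_K measurable_space[OF base.measurable_funpow_T]
    by (simp add: mp_action_def cocycle_Suc add.commute)
  then show ?case using Suc by (simp add: skew_def)
qed

lemma mpt_skew: "mpt (M \<Otimes>\<^sub>M P) skew"
proof -
  have "distr (M \<Otimes>\<^sub>M P) (M \<Otimes>\<^sub>M P) skew = M \<Otimes>\<^sub>M P"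
  proof (rule sym, rule pair_measure_eqI)
    show "sigma_finite_measure M" "sigma_finite_measure P" by unfold_locales
    show "sets (M \<Otimes>\<^sub>M P) = sets (distr (M \<Otimes>\<^sub>M P) (M \<Otimes>\<^sub>M P) skew)" by simp
    fix A B assume A [measurable]: "A \<in> sets M" and B [measurable]: "B \<in> sets P"
    have slice: "Pair t -` (skew -` (A \<times> B) \<inter> space (M \<Otimes>\<^sub>M P))
        = (if \<tau> t \<in> A then \<theta> (\<kappa> t) -` B \<inter> space P else {})" if "t \<in> space M" for t
      using that by (auto simp: skew_def space_pair_measure)
    have "emeasure (distr (M \<Otimes>\<^sub>M P) (M \<Otimes>\<^sub>M P) skew) (A \<times> B)
        = emeasure (M \<Otimes>\<^sub>M P) (skew -` (A \<times> B) \<inter> space (M \<Otimes>\<^sub>M P))"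
      by (intro emeasure_distr measurable_skew) simp
    also have "\<dots> = (\<integral>\<^sup>+t. emeasure P (Pair t -` (skew -` (A \<times> B) \<inter> space (M \<Otimes>\<^sub>M P))) \<partial>M)"
      by (intro P.emeasure_pair_measure_alt measurable_sets[OF measurable_skew]) simp
    also have "\<dots> = (\<integral>\<^sup>+t. emeasure P B * indicator (\<tau> -` A \<inter> space M) t \<partial>M)"
    proof (rule nn_integral_cong)
      fix t assume t: "t \<in> space M"
      show "emeasure P (Pair t -` (skew -` (A \<times> B) \<inter> space (M \<Otimes>\<^sub>M P)))
          = emeasure P B * indicator (\<tau> -` A \<inter> space M) t"
        unfolding slice[OF t] using t mpt_emeasure_vimage[OF mpt_\<theta>[OF \<kappa>_in_K[OF t]] B]
        by (simp add: indicator_def)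
    qed
    also have "\<dots> = emeasure P B * emeasure M (\<tau> -` A \<inter> space M)"
      by (intro nn_integral_cmult_indicator measurable_sets[OF base.measurable_T A])
    also have "\<dots> = emeasure M A * emeasure P B"
      using mpt_emeasure_vimage[OF base.mpt A] by (simp add: mult.commute)
    finally show "emeasure M A * emeasure P B = emeasure (distr (M \<Otimes>\<^sub>M P) (M \<Otimes>\<^sub>M P) skew) (A \<times> B)"
      by (rule sym)
  qed
  then show ?thesis using measurable_skew by (simp add: mpt_def)
qed

lemma mpt_prob_space_skew: "mpt_prob_space (M \<Otimes>\<^sub>M P) skew"
  by (rule mpt_prob_space.intro[OF MP.prob_space_axioms mpt_prob_space_axioms.intro[OF mpt_skew]])

lemma measure_Times_Int_vimage_funpow_skew:
  assumes [measurable]: "C \<in> sets M" "C' \<in> sets M" "B \<in> sets P" "B' \<in> sets P"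
  shows "measure (M \<Otimes>\<^sub>M P) ((C \<times> B) \<inter> ((skew ^^ i) -` (C' \<times> B') \<inter> space (M \<Otimes>\<^sub>M P)))
    = (\<integral>t. indicator C t * indicator C' ((\<tau> ^^ i) t) * measure P (B \<inter> (\<theta> (cocycle i t) -` B' \<inter> space P)) \<partial>M)"
    (is "measure _ ?X = integral\<^sup>L M ?h")
proof -
  have [measurable]: "(\<lambda>t. measure P (B \<inter> (\<theta> (cocycle i t) -` B' \<inter> space P))) \<in> borel_measurable M"
    using measurable_comp_cocycle[where g="\<lambda>k. measure P (B \<inter> (\<theta> k -` B' \<inter> space P))"] by simp
  have h_bounds: "0 \<le> ?h t" "?h t \<le> 1" for t
    by (auto simp: indicator_def)
  have "emeasure (M \<Otimes>\<^sub>M P) ?X = (\<integral>\<^sup>+t. emeasure P (Pair t -` ?X) \<partial>M)"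
    by (intro P.emeasure_pair_measure_alt sets.Int[OF pair_measureI[OF assms(1,3)]]
        measurable_sets[OF measurable_funpow[OF measurable_skew] pair_measureI[OF assms(2,4)]])
  also have "\<dots> = (\<integral>\<^sup>+t. ennreal (?h t) \<partial>M)"
  proof (rule nn_integral_cong)
    fix t assume t: "t \<in> space M"
    have "Pair t -` ?X = (if t \<in> C \<and> (\<tau> ^^ i) t \<in> C' then B \<inter> (\<theta> (cocycle i t) -` B' \<inter> space P) else {})"
      using t sets.sets_into_space[OF assms(3)] by (auto simp: funpow_skew space_pair_measure)
    then show "emeasure P (Pair t -` ?X) = ennreal (?h t)"
      by (simp add: P.emeasure_eq_measure indicator_def)
  qed
  also have "\<dots> = ennreal (integral\<^sup>L M ?h)"
    using h_bounds by (intro nn_integral_eq_integral M.integrable_const_bound[where B=1]) auto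
  finally have "ennreal (measure (M \<Otimes>\<^sub>M P) ?X) = ennreal (integral\<^sup>L M ?h)"
    by (simp add: MP.emeasure_eq_measure)
  moreover have "0 \<le> integral\<^sup>L M ?h"
    by (rule Bochner_Integration.integral_nonneg) (simp add: indicator_def)
  ultimately show ?thesis
    using measure_nonneg[of "M \<Otimes>\<^sub>M P" ?X] by (simp only: ennreal_inj)
qed

definition mixing_defect :: "'a set \<Rightarrow> 'a set \<Rightarrow> nat \<Rightarrow> 'm \<Rightarrow> real" where
  "mixing_defect B B' n t =
    1 / real n * (\<Sum>i<n. \<bar>measure P (B \<inter> (\<theta> (cocycle i t) -` B' \<inter> space P)) - measure P B * measure P B'\<bar>)"

lemma mixing_defect_bounds: "0 \<le> mixing_defect B B' n t" "mixing_defect B B' n t \<le> 1"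
proof -
  have "0 \<le> measure P B * measure P B'" "measure P B * measure P B' \<le> 1"
    by (auto intro: mult_le_one)
  then have "\<bar>measure P X - measure P B * measure P B'\<bar> \<le> 1" for X
    using P.prob_le_1[of X] measure_nonneg[of P X] unfolding abs_le_iff by (intro conjI) linarith+
  then have "(\<Sum>i<n. \<bar>measure P (B \<inter> (\<theta> (cocycle i t) -` B' \<inter> space P)) - measure P B * measure P B'\<bar>)
      \<le> real (card {..<n}) * 1"
    by (rule sum_bounded_above)
  moreover have "0 \<le> (\<Sum>i<n. \<bar>measure P (B \<inter> (\<theta> (cocycle i t) -` B' \<inter> space P)) - measure P B * measure P B'\<bar>)"
    by (intro sum_nonneg) simp
  ultimately show "0 \<le> mixing_defect B B' n t" "mixing_defect B B' n t \<le> 1"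
    unfolding mixing_defect_def by (auto simp: divide_le_eq)
qed

lemma borel_measurable_mixing_defect: "mixing_defect B B' n \<in> borel_measurable M"
  unfolding mixing_defect_def
  using measurable_comp_cocycle[where g="\<lambda>k. \<bar>measure P (B \<inter> (\<theta> k -` B' \<inter> space P)) - measure P B * measure P B'\<bar>"]
  by (intro borel_measurable_times[OF borel_measurable_const] borel_measurable_sum) simp

lemma integrable_mixing_defect: "integrable M (mixing_defect B B' n)"
  using mixing_defect_bounds borel_measurable_mixing_defect
  by (intro M.integrable_const_bound[where B=1]) auto

lemma integral_mixing_defect_tendsto_0:
  assumes "B \<in> sets P" "B' \<in> sets P"
  shows "(\<lambda>n. \<integral>t. mixing_defect B B' n t \<partial>M) \<longlonglongrightarrow> 0"
proof -
  have "(\<lambda>n. \<integral>t. mixing_defect B B' n t \<partial>M) \<longlonglongrightarrow> (\<integral>t. 0 \<partial>M)"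
  proof (rule integral_dominated_convergence[where w="\<lambda>t. 1"])
    show "AE t in M. (\<lambda>n. mixing_defect B B' n t) \<longlonglongrightarrow> 0"
      using weakly_mixing
    proof eventually_elim
      case (elim t)
      show ?case
        unfolding mixing_defect_def cocycle_def
        by (rule elim[unfolded weakly_mixing_along_def, rule_format, OF assms])
    qed
    show "AE t in M. norm (mixing_defect B B' n t) \<le> 1" for n
      using mixing_defect_bounds by simp
    show "(\<lambda>t. mixing_defect B B' n t) \<in> borel_measurable M" for n
      by (rule borel_measurable_mixing_defect)
  qed auto
  then show ?thesis by simp
qed

lemma correlation_average_skew_rectangles_approx:
  assumes C: "C \<in> sets M" "C' \<in> sets M" and B: "B \<in> sets P" "B' \<in> sets P"
  shows "\<bar>correlation_average (M \<Otimes>\<^sub>M P) skew (C \<times> B) (C' \<times> B') n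
      - measure P B * measure P B' * correlation_average M \<tau> C C' n\<bar>
    \<le> (\<integral>t. mixing_defect B B' n t \<partial>M)"
proof -
  let ?c = "measure P B * measure P B'"
  define a :: "nat \<Rightarrow> 'm \<Rightarrow> real" where "a i t = indicator C t * indicator C' ((\<tau> ^^ i) t)" for i t
  define m where "m i t = measure P (B \<inter> (\<theta> (cocycle i t) -` B' \<inter> space P))" for i t
  have a_bounds: "0 \<le> a i t" "a i t \<le> 1" for i t
    by (auto simp: a_def indicator_def)
  have m_bounds: "0 \<le> m i t" "m i t \<le> 1" for i t
    by (auto simp: m_def)
  have a_meas: "a i \<in> borel_measurable M" for i
    unfolding a_def using C by measurable
  have m_meas: "m i \<in> borel_measurable M" for i
    unfolding m_def using measurable_comp_cocycle[where g="\<lambda>k. measure P (B \<inter> (\<theta> k -` B' \<inter> space P))"]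
    by simp
  have "0 \<le> ?c" "?c \<le> 1" by (auto intro: mult_le_one)
  then have "\<bar>m i t - ?c\<bar> \<le> 1" for i t
    using m_bounds[of i t] unfolding abs_le_iff by (intro conjI) linarith+
  then have am_bound: "\<bar>a i t * (m i t - ?c)\<bar> \<le> 1" for i t
    using a_bounds[of i t] by (simp add: abs_mult mult_le_one)
  have int: "integrable M (\<lambda>t. a i t * (m i t - ?c))" "integrable M (a i)"
      "integrable M (\<lambda>t. a i t * m i t)" for i
    using am_bound a_bounds m_bounds a_meas m_meas mult_le_one[OF a_bounds(2) m_bounds]
    by (auto intro!: M.integrable_const_bound[where B=1])
  have skew_avg: "correlation_average (M \<Otimes>\<^sub>M P) skew (C \<times> B) (C' \<times> B') n
      = (\<Sum>i<n. \<integral>t. a i t * m i t \<partial>M) / real n"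
    unfolding correlation_average_def measure_Times_Int_vimage_funpow_skew[OF C B] a_def m_def ..
  have base_avg: "correlation_average M \<tau> C C' n = (\<Sum>i<n. \<integral>t. a i t \<partial>M) / real n"
    unfolding correlation_average_def base.measure_Int_vimage_funpow_eq_integral[OF C] a_def ..
  have "correlation_average (M \<Otimes>\<^sub>M P) skew (C \<times> B) (C' \<times> B') n - ?c * correlation_average M \<tau> C C' n
      = (\<Sum>i<n. \<integral>t. a i t * (m i t - ?c) \<partial>M) / real n"
  proof -
    have "(\<integral>t. a i t * (m i t - ?c) \<partial>M) = (\<integral>t. a i t * m i t - a i t * ?c \<partial>M)" for i
      by (simp only: right_diff_distrib)
    also have "\<dots> i = (\<integral>t. a i t * m i t \<partial>M) - (\<integral>t. a i t * ?c \<partial>M)" for i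
      using int by (intro Bochner_Integration.integral_diff) auto
    also have "(\<integral>t. a i t * ?c \<partial>M) = ?c * (\<integral>t. a i t \<partial>M)" for i
      by (simp add: mult.commute)
    finally have "(\<integral>t. a i t * (m i t - ?c) \<partial>M) = (\<integral>t. a i t * m i t \<partial>M) - ?c * (\<integral>t. a i t \<partial>M)" for i .
    then show ?thesis
      unfolding skew_avg base_avg by (simp add: sum_subtractf sum_distrib_left diff_divide_distrib)
  qed
  also have "\<dots> = (\<integral>t. (\<Sum>i<n. a i t * (m i t - ?c)) / real n \<partial>M)"
    using int by (simp add: Bochner_Integration.integral_sum)
  also have "\<bar>\<dots>\<bar> \<le> (\<integral>t. mixing_defect B B' n t \<partial>M)"
  proof (rule order_trans[OF integral_abs_bound integral_mono])
    show "integrable M (\<lambda>t. \<bar>(\<Sum>i<n. a i t * (m i t - ?c)) / real n\<bar>)"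
      using int by simp
    show "integrable M (mixing_defect B B' n)"
      by (rule integrable_mixing_defect)
    fix t
    have "\<bar>\<Sum>i<n. a i t * (m i t - ?c)\<bar> \<le> (\<Sum>i<n. \<bar>m i t - ?c\<bar>)"
      using a_bounds by (intro order_trans[OF sum_abs sum_mono]) (simp add: abs_mult mult_left_le_one_le)
    then show "\<bar>(\<Sum>i<n. a i t * (m i t - ?c)) / real n\<bar> \<le> mixing_defect B B' n t"
      by (simp add: mixing_defect_def m_def divide_right_mono)
  qed
  finally show ?thesis by simp
qed

lemma measure_Times:
  assumes "C \<in> sets M" "B \<in> sets P"
  shows "measure (M \<Otimes>\<^sub>M P) (C \<times> B) = measure M C * measure P B"
  using P.emeasure_pair_measure_Times[OF assms] by (simp add: measure_def enn2real_mult)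

lemma mixing_on_average_skew_rectangles:
  assumes C: "C \<in> sets M" "C' \<in> sets M" and B: "B \<in> sets P" "B' \<in> sets P"
  shows "mixing_on_average (M \<Otimes>\<^sub>M P) skew (C \<times> B) (C' \<times> B')"
proof -
  let ?c = "measure P B * measure P B'"
  have "(\<lambda>n. ?c * correlation_average M \<tau> C C' n) \<longlonglongrightarrow> ?c * (measure M C * measure M C')"
    using base.mixing_on_average_if_ergodic[OF C] by (intro tendsto_mult_left) (simp add: mixing_on_average_def)
  moreover have "(\<lambda>n. correlation_average (M \<Otimes>\<^sub>M P) skew (C \<times> B) (C' \<times> B') n
      - ?c * correlation_average M \<tau> C C' n) \<longlonglongrightarrow> 0"
    using correlation_average_skew_rectangles_approx[OF C B, folded real_norm_def]
      integral_mixing_defect_tendsto_0[OF B]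
    by (rule Lim_null_comparison[OF always_eventually[OF allI]])
  ultimately have "correlation_average (M \<Otimes>\<^sub>M P) skew (C \<times> B) (C' \<times> B')
      \<longlonglongrightarrow> ?c * (measure M C * measure M C')"
    by (rule Lim_transform)
  moreover have "?c * (measure M C * measure M C') = measure (M \<Otimes>\<^sub>M P) (C \<times> B) * measure (M \<Otimes>\<^sub>M P) (C' \<times> B')"
    using C B by (simp add: measure_Times ac_simps)
  ultimately show ?thesis by (simp add: mixing_on_average_def)
qed

theorem ergodic_skew: "ergodic (M \<Otimes>\<^sub>M P) skew"
proof -
  interpret product: mpt_prob_space "M \<Otimes>\<^sub>M P" skew
    by (rule mpt_prob_space_skew)
  show ?thesis
  proof (rule product.ergodic_if_mixing_on_average)
    show "sets (M \<Otimes>\<^sub>M P) = sigma_sets (space (M \<Otimes>\<^sub>M P)) {a \<times> b | a b. a \<in> sets M \<and> b \<in> sets P}"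
      by (simp add: sets_pair_measure space_pair_measure)
    show "Int_stable {a \<times> b | a b. a \<in> sets M \<and> b \<in> sets P}"
      by (rule Int_stable_pair_measure_generator)
    show "{a \<times> b | a b. a \<in> sets M \<and> b \<in> sets P} \<subseteq> Pow (space (M \<Otimes>\<^sub>M P))"
      using pair_measure_closed by (simp add: space_pair_measure)
    fix E A assume "E \<in> {a \<times> b | a b. a \<in> sets M \<and> b \<in> sets P}" "A \<in> {a \<times> b | a b. a \<in> sets M \<and> b \<in> sets P}"
    then show "mixing_on_average (M \<Otimes>\<^sub>M P) skew E A"
      using mixing_on_average_skew_rectangles by blast
  qed
qed

end

theorem corollary3p1:
  fixes P :: "'a measure" and M :: "'m measure"
    and K :: "(int ^ 'd) set"
    and \<theta> :: "int ^ 'd \<Rightarrow> 'a \<Rightarrow> 'a"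
    and \<tau> :: "'m \<Rightarrow> 'm" and \<kappa> :: "'m \<Rightarrow> int ^ 'd"
    and F :: "'m \<times> 'a \<Rightarrow> real"
  assumes K: "K = nonneg_lattice \<or> K = UNIV"
    and P: "prob_space P" and M: "prob_space M"
    and act: "mp_action P K \<theta>"
    and erg: "ergodic M \<tau>"
    and \<kappa>_meas: "\<kappa> \<in> measurable M (count_space K)"
    and wm: "AE t in M. weakly_mixing_along P \<theta> (\<lambda>n. \<Sum>i<n. \<kappa> ((\<tau> ^^ i) t))"
    and F: "integrable (M \<Otimes>\<^sub>M P) F"
  shows "(AE x in M \<Otimes>\<^sub>M P.
           (\<lambda>n. (1 / real n) * (\<Sum>i<n. F ((\<tau> ^^ i) (fst x),
                   \<theta> (\<Sum>j<i. \<kappa> ((\<tau> ^^ j) (fst x))) (snd x))))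
           \<longlonglongrightarrow> integral\<^sup>L (M \<Otimes>\<^sub>M P) F) \<and>
         (\<lambda>n. \<integral>\<^sup>+ x. ennreal \<bar>(1 / real n) * (\<Sum>i<n. F ((\<tau> ^^ i) (fst x),
                   \<theta> (\<Sum>j<i. \<kappa> ((\<tau> ^^ j) (fst x))) (snd x))) - integral\<^sup>L (M \<Otimes>\<^sub>M P) F\<bar>
                 \<partial>(M \<Otimes>\<^sub>M P)) \<longlonglongrightarrow> 0"
proof -
  have "0 \<in> K" "\<And>k l. k \<in> K \<Longrightarrow> l \<in> K \<Longrightarrow> k + l \<in> K"
    using K by (auto simp: nonneg_lattice_def)
  then interpret skew_product M P K \<theta> \<tau> \<kappa>
    using act erg \<kappa>_meas wm by (intro skew_product.intro M P skew_product_axioms.intro)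
  interpret product: ergodic_prob_space "M \<Otimes>\<^sub>M P" skew
    by (intro ergodic_prob_space.intro MP.prob_space_axioms ergodic_prob_space_axioms.intro ergodic_skew)
  have average: "birkhoff_sum skew F n x / real n = (1 / real n) * (\<Sum>i<n. F ((\<tau> ^^ i) (fst x),
      \<theta> (\<Sum>j<i. \<kappa> ((\<tau> ^^ j) (fst x))) (snd x)))" if "x \<in> space (M \<Otimes>\<^sub>M P)" for n x
    using that by (cases x) (simp add: birkhoff_sum_def funpow_skew cocycle_def space_pair_measure)
  show ?thesis
  proof
    show "AE x in M \<Otimes>\<^sub>M P. (\<lambda>n. (1 / real n) * (\<Sum>i<n. F ((\<tau> ^^ i) (fst x),
        \<theta> (\<Sum>j<i. \<kappa> ((\<tau> ^^ j) (fst x))) (snd x)))) \<longlonglongrightarrow> integral\<^sup>L (M \<Otimes>\<^sub>M P) F"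
      using product.birkhoff_ergodic_AE[OF F] AE_space by eventually_elim (simp add: average)
    show "(\<lambda>n. \<integral>\<^sup>+ x. ennreal \<bar>(1 / real n) * (\<Sum>i<n. F ((\<tau> ^^ i) (fst x),
        \<theta> (\<Sum>j<i. \<kappa> ((\<tau> ^^ j) (fst x))) (snd x))) - integral\<^sup>L (M \<Otimes>\<^sub>M P) F\<bar> \<partial>(M \<Otimes>\<^sub>M P)) \<longlonglongrightarrow> 0"
      using product.birkhoff_ergodic_L1[OF F] by (simp add: average cong: nn_integral_cong)
  qed
qed

end
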